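(* For any $0\le\alpha<\lambda_1(\Omega)$ we have $\lim_{\beta\nearrow\beta^*}S_{\alpha,\beta}=S_{\alpha,\beta^*}$.
   Context: $m\ge1$ is an integer and $\Omega\subseteq\mathbb{R}^{2m}$ is a bounded open set with smooth boundary. $\omega_l$ is the $l$-dimensional Hausdorff measure of $\mathbb{S}^l\subseteq\mathbb{R}^{l+1}$ and $\beta^*:=m(2m-1)!\,\omega_{2m}$. $\Delta^{\frac m2}u:=\Delta^ku$ if $m=2k$, $\nabla\Delta^ku$ if $m=2k+1$; $\|u\|_{H_0^m(\Omega)}:=\|\Delta^{\frac m2}u\|_{L^2(\Omega)}$. $\lambda_1(\Omega):=\inf_{u\in H_0^m(\Omega)\setminus\{0\}}\|u\|_{H_0^m}^2/\|u\|_{L^2}^2$. $\|u\|_\alpha^2:=\|u\|_{H_0^m(\Omega)}^2-\alpha\|u\|_{L^2(\Omega)}^2$, $M_\alpha:=\{u\in H_0^m(\Omega):\|u\|_\alpha\le1\}$, $F_\beta(u):=\int_\Omega e^{\beta u^2}dx$, $S_{\alpha,\beta}:=\sup_{M_\alpha}F_\beta\in(0,+\infty]$. *)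

theory Defs
  imports "HOL-Analysis.Analysis"
begin

(* Functions on R^n are modelled as  real^'n => real ; the dimension n = CARD('n). *)

definition partial :: "'n::finite \<Rightarrow> (real^'n \<Rightarrow> real) \<Rightarrow> real^'n \<Rightarrow> real" where
  "partial i f x = deriv (\<lambda>t. f (x + t *\<^sub>R axis i 1)) 0"

fun iter_partial :: "'n::finite list \<Rightarrow> (real^'n \<Rightarrow> real) \<Rightarrow> real^'n \<Rightarrow> real" where
  "iter_partial [] f = f"
| "iter_partial (i # is) f = partial i (iter_partial is f)"

definition smooth_fun :: "(real^'n::finite \<Rightarrow> real) \<Rightarrow> bool" where
  "smooth_fun f \<longleftrightarrow>
     (\<forall>is. continuous_on UNIV (iter_partial is f) \<and>
       (\<forall>i x. (\<lambda>t. iter_partial is f (x + t *\<^sub>R axis i 1)) differentiable (at 0)))"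

definition test_fun :: "(real^'n::finite) set \<Rightarrow> (real^'n \<Rightarrow> real) \<Rightarrow> bool" where
  "test_fun \<Omega> \<phi> \<longleftrightarrow> smooth_fun \<phi> \<and> compact (closure {x. \<phi> x \<noteq> 0})
      \<and> closure {x. \<phi> x \<noteq> 0} \<subseteq> \<Omega>"

definition smooth_boundary :: "(real^'n::finite) set \<Rightarrow> bool" where
  "smooth_boundary \<Omega> \<longleftrightarrow>
     (\<forall>p\<in>frontier \<Omega>. \<exists>r>0. \<exists>\<rho>. smooth_fun \<rho> \<and> (\<exists>i. partial i \<rho> p \<noteq> 0) \<and>
        \<Omega> \<inter> ball p r = {x \<in> ball p r. \<rho> x < 0})"

definition lap :: "(real^'n::finite \<Rightarrow> real) \<Rightarrow> real^'n \<Rightarrow> real" where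
  "lap f x = (\<Sum>i\<in>UNIV. partial i (partial i f) x)"

text \<open>The square of the L^2(Omega) norm of Delta^(m/2) phi
  (Delta^k phi for m = 2k, grad Delta^k phi for m = 2k+1).\<close>
definition poly_energy :: "(real^'n::finite) set \<Rightarrow> nat \<Rightarrow> (real^'n \<Rightarrow> real) \<Rightarrow> ennreal" where
  "poly_energy \<Omega> m \<phi> =
     (if even m then (\<integral>\<^sup>+ x\<in>\<Omega>. ennreal (((lap ^^ (m div 2)) \<phi> x)\<^sup>2) \<partial>lebesgue)
      else (\<integral>\<^sup>+ x\<in>\<Omega>. ennreal (\<Sum>i\<in>UNIV. (partial i ((lap ^^ (m div 2)) \<phi>) x)\<^sup>2) \<partial>lebesgue))"

definition L2norm2 :: "(real^'n::finite) set \<Rightarrow> (real^'n \<Rightarrow> real) \<Rightarrow> real" where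
  "L2norm2 \<Omega> u = enn2real (\<integral>\<^sup>+ x\<in>\<Omega>. ennreal ((u x)\<^sup>2) \<partial>lebesgue)"

text \<open>phi is a sequence of test functions converging to u in L^2(Omega) and Cauchy
  in the norm of Delta^(m/2); H_0^m(Omega) is the completion of C_c^infinity(Omega).\<close>
definition approx_seq :: "(real^'n::finite) set \<Rightarrow> nat \<Rightarrow> (real^'n \<Rightarrow> real) \<Rightarrow> (nat \<Rightarrow> real^'n \<Rightarrow> real) \<Rightarrow> bool" where
  "approx_seq \<Omega> m u \<phi> \<longleftrightarrow> (\<forall>k. test_fun \<Omega> (\<phi> k)) \<and>
     ((\<lambda>k. \<integral>\<^sup>+ x\<in>\<Omega>. ennreal ((\<phi> k x - u x)\<^sup>2) \<partial>lebesgue) \<longlonglongrightarrow> 0) \<and>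
     (\<forall>e::real>0. \<exists>N. \<forall>j\<ge>N. \<forall>k\<ge>N. poly_energy \<Omega> m (\<lambda>x. \<phi> j x - \<phi> k x) < ennreal e)"

definition H0m :: "(real^'n::finite) set \<Rightarrow> nat \<Rightarrow> (real^'n \<Rightarrow> real) set" where
  "H0m \<Omega> m = {u. u \<in> borel_measurable lebesgue \<and> (\<exists>\<phi>. approx_seq \<Omega> m u \<phi>)}"

definition H0norm2 :: "(real^'n::finite) set \<Rightarrow> nat \<Rightarrow> (real^'n \<Rightarrow> real) \<Rightarrow> real" where
  "H0norm2 \<Omega> m u = (THE c. \<exists>\<phi>. approx_seq \<Omega> m u \<phi> \<and>
       ((\<lambda>k. enn2real (poly_energy \<Omega> m (\<phi> k))) \<longlonglongrightarrow> c))"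

definition lambda1 :: "(real^'n::finite) set \<Rightarrow> nat \<Rightarrow> real" where
  "lambda1 \<Omega> m = Inf {H0norm2 \<Omega> m u / L2norm2 \<Omega> u | u. u \<in> H0m \<Omega> m \<and> L2norm2 \<Omega> u \<noteq> 0}"

definition M_alpha :: "(real^'n::finite) set \<Rightarrow> nat \<Rightarrow> real \<Rightarrow> (real^'n \<Rightarrow> real) set" where
  "M_alpha \<Omega> m \<alpha> = {u \<in> H0m \<Omega> m. H0norm2 \<Omega> m u - \<alpha> * L2norm2 \<Omega> u \<le> 1}"

definition F_beta :: "(real^'n::finite) set \<Rightarrow> real \<Rightarrow> (real^'n \<Rightarrow> real) \<Rightarrow> ennreal" where
  "F_beta \<Omega> \<beta> u = (\<integral>\<^sup>+ x\<in>\<Omega>. ennreal (exp (\<beta> * (u x)\<^sup>2)) \<partial>lebesgue)"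

definition S_ab :: "(real^'n::finite) set \<Rightarrow> nat \<Rightarrow> real \<Rightarrow> real \<Rightarrow> ennreal" where
  "S_ab \<Omega> m \<alpha> \<beta> = (SUP u \<in> M_alpha \<Omega> m \<alpha>. F_beta \<Omega> \<beta> u)"

text \<open>omega_l = H^l(S^l) = (l+1) * |B^(l+1)|.\<close>
definition sphere_area :: "nat \<Rightarrow> real" where
  "sphere_area l = real (l + 1) * unit_ball_vol (real (l + 1))"

definition beta_star :: "nat \<Rightarrow> real" where
  "beta_star m = real m * fact (2 * m - 1) * sphere_area (2 * m)"

end

theory Submission
  imports Defs
begin

text \<open>Each \<open>F_beta \<Omega> \<beta> u\<close> is nondecreasing and, by monotone convergence, left-continuous in
  \<open>\<beta>\<close>. A supremum of nondecreasing left-continuous functions is again left-continuous, which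
  is the claim for \<open>S_ab\<close>; no property of \<open>\<beta>\<^sup>*\<close>, \<open>\<alpha>\<close> or \<open>\<Omega>\<close> beyond measurability is needed.\<close>

lemma incseq_minus_inverse_Suc: "incseq (\<lambda>n. b - 1 / real (Suc n))"
  by (intro incseq_SucI) (simp add: frac_le)

lemma eventually_at_left_less_of_mono:
  fixes f :: "real \<Rightarrow> 'a::linorder"
  assumes "mono f" and "f b < a"
  shows "eventually (\<lambda>x. f x < a) (at_left b)"
proof -
  have "eventually (\<lambda>x. x \<in> {b - 1<..<b}) (at_left b)"
    by (rule eventually_at_left_real) simp
  then show ?thesis
  proof (rule eventually_mono)
    fix x assume "x \<in> {b - 1<..<b}"
    then have "f x \<le> f b"
      using assms(1) by (auto intro: monoD)
    then show "f x < a"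
      using assms(2) by (rule order_le_less_trans)
  qed
qed

lemma tendsto_at_left_of_mono_SUP:
  fixes f :: "real \<Rightarrow> 'a::{complete_linorder, linorder_topology}"
  assumes "mono f" and "f b \<le> (SUP n. f (b - 1 / real (Suc n)))"
  shows "(f \<longlongrightarrow> f b) (at_left b)"
proof (rule order_tendstoI)
  fix a assume "a < f b"
  then have "a < (SUP n. f (b - 1 / real (Suc n)))"
    using assms(2) by (rule order_less_le_trans)
  then obtain n where n: "a < f (b - 1 / real (Suc n))"
    by (auto simp: less_SUP_iff)
  have "eventually (\<lambda>x. x \<in> {b - 1 / real (Suc n)<..<b}) (at_left b)"
    by (rule eventually_at_left_real) simp
  then show "eventually (\<lambda>x. a < f x) (at_left b)"
  proof (rule eventually_mono)
    fix x assume "x \<in> {b - 1 / real (Suc n)<..<b}"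
    then have "f (b - 1 / real (Suc n)) \<le> f x"
      using assms(1) by (auto intro: monoD)
    with n show "a < f x"
      by (rule order_less_le_trans)
  qed
next
  fix a assume "f b < a"
  with assms(1) show "eventually (\<lambda>x. f x < a) (at_left b)"
    by (rule eventually_at_left_less_of_mono)
qed

lemma tendsto_at_left_SUP_mono_family:
  fixes f :: "'i \<Rightarrow> real \<Rightarrow> 'a::{complete_linorder, linorder_topology}"
  assumes mono: "\<And>i. i \<in> I \<Longrightarrow> mono (f i)"
    and cont: "\<And>i. i \<in> I \<Longrightarrow> (f i \<longlongrightarrow> f i b) (at_left b)"
  shows "((\<lambda>x. SUP i\<in>I. f i x) \<longlongrightarrow> (SUP i\<in>I. f i b)) (at_left b)"
proof (rule order_tendstoI)
  fix a assume "a < (SUP i\<in>I. f i b)"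
  then obtain i where i: "i \<in> I" "a < f i b"
    by (auto simp: less_SUP_iff)
  from order_tendstoD(1)[OF cont[OF i(1)] i(2)]
  show "eventually (\<lambda>x. a < (SUP i\<in>I. f i x)) (at_left b)"
    by eventually_elim (use i(1) in \<open>auto simp: less_SUP_iff\<close>)
next
  fix a assume less: "(SUP i\<in>I. f i b) < a"
  have "mono (\<lambda>x. SUP i\<in>I. f i x)"
  proof (intro monoI SUP_mono)
    fix x y :: real and i assume "x \<le> y" "i \<in> I"
    then show "\<exists>j\<in>I. f i x \<le> f j y"
      using monoD[OF mono[OF \<open>i \<in> I\<close>] \<open>x \<le> y\<close>] \<open>i \<in> I\<close> by blast
  qed
  then show "eventually (\<lambda>x. (SUP i\<in>I. f i x) < a) (at_left b)"
    using less by (rule eventually_at_left_less_of_mono)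
qed

lemma mono_ennreal_exp_mult: "mono (\<lambda>\<beta>. ennreal (exp (\<beta> * y)))" if "0 \<le> y"
  using that by (intro monoI ennreal_leI) (simp add: mult_right_mono)

lemma incseq_ennreal_exp_mult_left:
  fixes b y :: real
  assumes "0 \<le> y"
  shows "incseq (\<lambda>n. ennreal (exp ((b - 1 / real (Suc n)) * y)))"
proof (rule monoI)
  fix k l :: nat assume "k \<le> l"
  then have "b - 1 / real (Suc k) \<le> b - 1 / real (Suc l)"
    by (rule monoD[OF incseq_minus_inverse_Suc])
  then show "ennreal (exp ((b - 1 / real (Suc k)) * y)) \<le> ennreal (exp ((b - 1 / real (Suc l)) * y))"
    by (rule monoD[OF mono_ennreal_exp_mult[OF assms]])
qed

lemma ennreal_exp_mult_eq_SUP: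
  fixes b y :: real
  assumes "0 \<le> y"
  shows "ennreal (exp (b * y)) = (SUP n. ennreal (exp ((b - 1 / real (Suc n)) * y)))"
proof -
  have "(\<lambda>n. 1 / real (Suc n)) \<longlonglongrightarrow> 0"
    using LIMSEQ_inverse_real_of_nat by (simp add: inverse_eq_divide)
  then have "(\<lambda>n. ennreal (exp ((b - 1 / real (Suc n)) * y))) \<longlonglongrightarrow> ennreal (exp ((b - 0) * y))"
    by (intro tendsto_ennrealI tendsto_intros)
  then have "(\<lambda>n. ennreal (exp ((b - 1 / real (Suc n)) * y))) \<longlonglongrightarrow> ennreal (exp (b * y))"
    by simp
  then show ?thesis
    using LIMSEQ_SUP[OF incseq_ennreal_exp_mult_left[OF assms]] by (rule LIMSEQ_unique)
qed

lemma mono_F_beta: "mono (\<lambda>\<beta>. F_beta \<Omega> \<beta> u)"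
proof (rule monoI)
  fix \<beta>\<^sub>1 \<beta>\<^sub>2 :: real assume "\<beta>\<^sub>1 \<le> \<beta>\<^sub>2"
  then show "F_beta \<Omega> \<beta>\<^sub>1 u \<le> F_beta \<Omega> \<beta>\<^sub>2 u"
    unfolding F_beta_def
    by (intro nn_integral_mono mult_right_mono monoD[OF mono_ennreal_exp_mult]) auto
qed

lemma F_beta_eq_SUP:
  assumes "u \<in> borel_measurable lebesgue" and "\<Omega> \<in> sets lebesgue"
  shows "F_beta \<Omega> b u = (SUP n. F_beta \<Omega> (b - 1 / real (Suc n)) u)"
proof -
  let ?g = "\<lambda>n x. ennreal (exp ((b - 1 / real (Suc n)) * (u x)\<^sup>2)) * indicator \<Omega> x"
  have "F_beta \<Omega> b u = (\<integral>\<^sup>+ x. (SUP n. ?g n x) \<partial>lebesgue)"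
    unfolding F_beta_def
    by (intro nn_integral_cong) (simp add: ennreal_exp_mult_eq_SUP[of "(u _)\<^sup>2" b] indicator_def)
  also have "\<dots> = (SUP n. \<integral>\<^sup>+ x. ?g n x \<partial>lebesgue)"
  proof (rule nn_integral_monotone_convergence_SUP)
    show "incseq ?g"
    proof (intro monoI le_funI)
      fix k l :: nat and x assume "k \<le> l"
      then show "?g k x \<le> ?g l x"
        by (intro mult_right_mono monoD[OF incseq_ennreal_exp_mult_left]) auto
    qed
    show "\<And>n. ?g n \<in> borel_measurable lebesgue"
      using assms by measurable
  qed
  finally show ?thesis
    unfolding F_beta_def .
qed

lemma tendsto_F_beta_at_left:
  assumes "u \<in> borel_measurable lebesgue" and "\<Omega> \<in> sets lebesgue"
  shows "((\<lambda>\<beta>. F_beta \<Omega> \<beta> u) \<longlongrightarrow> F_beta \<Omega> b u) (at_left b)"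
  by (rule tendsto_at_left_of_mono_SUP[OF mono_F_beta eq_refl[OF F_beta_eq_SUP[OF assms]]])

theorem lemma3p4:
  fixes m :: nat and \<Omega> :: "(real^'n::finite) set" and \<alpha> :: real
  assumes "m \<ge> 1" and "CARD('n) = 2 * m"
    and "open \<Omega>" and "bounded \<Omega>" and "smooth_boundary \<Omega>"
    and "0 \<le> \<alpha>" and "\<alpha> < lambda1 \<Omega> m"
  shows "((\<lambda>\<beta>. S_ab \<Omega> m \<alpha> \<beta>) \<longlongrightarrow> S_ab \<Omega> m \<alpha> (beta_star m)) (at_left (beta_star m))"
proof -
  have "\<Omega> \<in> sets lebesgue"
    using \<open>open \<Omega>\<close> by simp
  moreover have "u \<in> borel_measurable lebesgue" if "u \<in> M_alpha \<Omega> m \<alpha>" for u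
    using that by (simp add: M_alpha_def H0m_def)
  ultimately show ?thesis
    unfolding S_ab_def
    by (intro tendsto_at_left_SUP_mono_family mono_F_beta tendsto_F_beta_at_left)
qed

end
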